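(* The complete tripartite graphs $K_{1,1,1}$, $K_{1,1,2}$, $K_{1,2,2}$, $K_{2,2,2}$ and $K_{2,2,3}$ are $e$-positive, and every other complete tripartite graph $K_{r,s,t}$ (with $r,s,t\ge1$) is not Schur positive.
   Context: $K_{r,s,t}$ denotes the complete tripartite graph with parts of sizes $r,s,t$. For a finite simple graph $G$, the chromatic symmetric function is $X_G=\sum_{\kappa}\prod_{v\in V(G)}x_{\kappa(v)}$ over proper colorings $\kappa:V(G)\to\{1,2,\dots\}$. $G$ is $e$-positive (resp. Schur positive) if all coefficients of $X_G$ in the basis of elementary symmetric functions $e_\lambda$ (resp. Schur functions $s_\lambda$) are nonnegative. *)

theory Defs
  imports "HOL-Library.FuncSet"
begin

text \<open>Homogeneous symmetric functions of degree n are represented by their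
coefficient functions on monomials x^alpha, where alpha :: nat => nat is an
exponent vector (variables x_0, x_1, ... indexed by nat).\<close>

definition partitions :: "nat \<Rightarrow> nat list set" where
  "partitions n = {lam. sorted_wrt (\<ge>) lam \<and> (\<forall>x\<in>set lam. 0 < x) \<and> sum_list lam = n}"

text \<open>Graph: finite vertex set V with symmetric irreflexive adjacency E.
Coefficient of x^alpha in the chromatic symmetric function X_G:
the number of proper colourings with exactly alpha i vertices of colour i.\<close>
definition chrom_coeff :: "'a set \<Rightarrow> ('a \<Rightarrow> 'a \<Rightarrow> bool) \<Rightarrow> (nat \<Rightarrow> nat) \<Rightarrow> nat" where
  "chrom_coeff V E alpha = card {kappa \<in> V \<rightarrow>\<^sub>E (UNIV :: nat set).
      (\<forall>u\<in>V. \<forall>v\<in>V. E u v \<longrightarrow> kappa u \<noteq> kappa v) \<and>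
      (\<forall>i. card {v\<in>V. kappa v = i} = alpha i)}"

text \<open>Coefficient of x^alpha in e_lam = e_{lam_1} e_{lam_2} ...: choices of sets
S_j of lam_j distinct variables, one per factor, whose product is x^alpha.\<close>
definition e_coeff :: "nat list \<Rightarrow> (nat \<Rightarrow> nat) \<Rightarrow> nat" where
  "e_coeff lam alpha = card {Ss :: nat set list. length Ss = length lam \<and>
      (\<forall>j<length lam. finite (Ss ! j) \<and> card (Ss ! j) = lam ! j) \<and>
      (\<forall>i. card {j. j < length lam \<and> i \<in> Ss ! j} = alpha i)}"

definition cells :: "nat list \<Rightarrow> (nat \<times> nat) set" where
  "cells lam = {(i, j). i < length lam \<and> j < lam ! i}"

definition ssyt :: "nat list \<Rightarrow> (nat \<Rightarrow> nat) \<Rightarrow> ((nat \<times> nat) \<Rightarrow> nat) set" where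
  "ssyt lam alpha = {T \<in> cells lam \<rightarrow>\<^sub>E (UNIV :: nat set).
      (\<forall>i j. (i, Suc j) \<in> cells lam \<longrightarrow> T (i, j) \<le> T (i, Suc j)) \<and>
      (\<forall>i j. (Suc i, j) \<in> cells lam \<longrightarrow> T (i, j) < T (Suc i, j)) \<and>
      (\<forall>k. card {c \<in> cells lam. T c = k} = alpha k)}"

definition s_coeff :: "nat list \<Rightarrow> (nat \<Rightarrow> nat) \<Rightarrow> nat" where
  "s_coeff lam alpha = card (ssyt lam alpha)"

definition e_positive :: "'a set \<Rightarrow> ('a \<Rightarrow> 'a \<Rightarrow> bool) \<Rightarrow> bool" where
  "e_positive V E = (\<exists>c :: nat list \<Rightarrow> int.
      (\<forall>mu\<in>partitions (card V). 0 \<le> c mu) \<and>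
      (\<forall>alpha. int (chrom_coeff V E alpha) =
          (\<Sum>mu\<in>partitions (card V). c mu * int (e_coeff mu alpha))))"

definition schur_positive :: "'a set \<Rightarrow> ('a \<Rightarrow> 'a \<Rightarrow> bool) \<Rightarrow> bool" where
  "schur_positive V E = (\<exists>c :: nat list \<Rightarrow> int.
      (\<forall>mu\<in>partitions (card V). 0 \<le> c mu) \<and>
      (\<forall>alpha. int (chrom_coeff V E alpha) =
          (\<Sum>mu\<in>partitions (card V). c mu * int (s_coeff mu alpha))))"

definition tri_V :: "nat \<Rightarrow> nat \<Rightarrow> nat \<Rightarrow> (nat \<times> nat) set" where
  "tri_V r s t = {(i, j). (i = 0 \<and> j < r) \<or> (i = 1 \<and> j < s) \<or> (i = 2 \<and> j < t)}"

definition tri_E :: "(nat \<times> nat) \<Rightarrow> (nat \<times> nat) \<Rightarrow> bool" where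
  "tri_E u v = (fst u \<noteq> fst v)"

end

theory Submission
  imports Defs "HOL-Combinatorics.Permutations"
begin

text \<open>In a complete multipartite graph every colour class of a proper colouring lies inside
  a single part. Hence the coefficient of \<open>x^alpha\<close> in \<open>X_G\<close> is a count depending only on the
  part sizes and the nonzero entries of \<open>alpha\<close>, just as the coefficient of \<open>x^alpha\<close> in
  \<open>e_mu\<close> counts 0-1 matrices with row sums \<open>mu\<close> and column sums \<open>alpha\<close>. For the five
  exceptional graphs the \<open>e\<close>-expansion is therefore checked by evaluating both counts on the
  finitely many compositions of \<open>|V|\<close>.

  Conversely, the coefficient of \<open>x^alpha\<close> in a Schur function is a Kostka number, which does
  not decrease when a unit moves from \<open>alpha_0\<close> to \<open>alpha_1 < alpha_0\<close>: turning the last \<open>0\<close>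
  in the first row of a tableau into a \<open>1\<close> is injective. A Schur positive \<open>X_G\<close> inherits this
  monotonicity, and for every other \<open>K_{r,s,t}\<close> an explicit composition violates it: its
  coefficient is positive, while the shifted composition cannot be realised by colour classes
  fitting into the parts.\<close>

section \<open>Counting proper colourings by colour classes\<close>

definition proper_colourings ::
    "'a set \<Rightarrow> ('a \<Rightarrow> 'a \<Rightarrow> bool) \<Rightarrow> (nat \<Rightarrow> nat) \<Rightarrow> ('a \<Rightarrow> nat) set" where
  "proper_colourings V E alpha = {kappa \<in> V \<rightarrow>\<^sub>E (UNIV :: nat set).
      (\<forall>u\<in>V. \<forall>v\<in>V. E u v \<longrightarrow> kappa u \<noteq> kappa v) \<and>
      (\<forall>i. card {v\<in>V. kappa v = i} = alpha i)}"

lemma chrom_coeff_eq_card: "chrom_coeff V E alpha = card (proper_colourings V E alpha)"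
  by (simp add: chrom_coeff_def proper_colourings_def)

lemma proper_colouring_colour_used:
  assumes "kappa \<in> proper_colourings V E alpha" "finite V"
  shows "alpha i \<noteq> 0 \<longleftrightarrow> i \<in> kappa ` V"
proof -
  have "alpha i = card {v\<in>V. kappa v = i}"
    using assms(1) by (simp add: proper_colourings_def)
  then show ?thesis using assms(2) by auto
qed

lemma finite_proper_colourings:
  assumes "finite V" "finite {i. alpha i \<noteq> 0}"
  shows "finite (proper_colourings V E alpha)"
proof (rule finite_subset)
  show "proper_colourings V E alpha \<subseteq> V \<rightarrow>\<^sub>E {i. alpha i \<noteq> 0}"
  proof
    fix kappa assume kappa: "kappa \<in> proper_colourings V E alpha"
    then have "kappa \<in> V \<rightarrow>\<^sub>E UNIV"
      by (simp add: proper_colourings_def)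
    moreover have "kappa v \<in> {i. alpha i \<noteq> 0}" if "v \<in> V" for v
      using proper_colouring_colour_used[OF kappa assms(1)] that by auto
    ultimately show "kappa \<in> V \<rightarrow>\<^sub>E {i. alpha i \<noteq> 0}"
      by (auto simp: PiE_iff)
  qed
  show "finite (V \<rightarrow>\<^sub>E {i. alpha i \<noteq> 0})"
    using assms by (rule finite_PiE)
qed

lemma proper_colourings_infinite_support:
  assumes "finite V" "infinite {i. alpha i \<noteq> 0}"
  shows "proper_colourings V E alpha = {}"
proof (rule ccontr)
  assume "proper_colourings V E alpha \<noteq> {}"
  then obtain kappa where "kappa \<in> proper_colourings V E alpha"
    by blast
  then have "{i. alpha i \<noteq> 0} \<subseteq> kappa ` V"
    using proper_colouring_colour_used[OF _ assms(1)] by blast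
  then show False
    using assms by (meson finite_imageI finite_subset)
qed

lemma card_proper_colourings_zero:
  assumes "finite V"
  shows "card (proper_colourings V E (\<lambda>_. 0)) = (if V = {} then 1 else 0)"
proof (cases "V = {}")
  case True
  then have "proper_colourings V E (\<lambda>_. 0) = {\<lambda>_. undefined}"
    by (auto simp: proper_colourings_def)
  then show ?thesis
    using True by simp
next
  case False
  have "proper_colourings V E (\<lambda>_. 0) = {}"
    using proper_colouring_colour_used[OF _ assms] False by blast
  then show ?thesis
    using False by simp
qed

definition independent_set :: "('a \<Rightarrow> 'a \<Rightarrow> bool) \<Rightarrow> 'a set \<Rightarrow> bool" where
  "independent_set E C \<longleftrightarrow> (\<forall>u\<in>C. \<forall>v\<in>C. \<not> E u v)"

lemma colour_class_independent:
  assumes "kappa \<in> proper_colourings V E alpha"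
  shows "independent_set E {v\<in>V. kappa v = i}"
proof -
  have "kappa u \<noteq> kappa v" if "u \<in> V" "v \<in> V" "E u v" for u v
    using assms that by (simp add: proper_colourings_def)
  then show ?thesis
    unfolding independent_set_def by blast
qed

lemma bij_betw_restrict_colour_class:
  assumes V: "finite V" and C: "C \<subseteq> V" "card C = alpha i" "independent_set E C"
  shows "bij_betw (\<lambda>kappa. restrict kappa (V - C))
           {kappa \<in> proper_colourings V E alpha. {v\<in>V. kappa v = i} = C}
           (proper_colourings (V - C) E (alpha(i := 0)))"
proof (rule bij_betwI[where g = "\<lambda>kappa. restrict (\<lambda>v. if v \<in> C then i else kappa v) V"])
  show "(\<lambda>kappa. restrict kappa (V - C))
      \<in> {kappa \<in> proper_colourings V E alpha. {v\<in>V. kappa v = i} = C}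
        \<rightarrow> proper_colourings (V - C) E (alpha(i := 0))"
  proof
    fix kappa assume kappa: "kappa \<in> {kappa \<in> proper_colourings V E alpha. {v\<in>V. kappa v = i} = C}"
    have "{v\<in>V - C. restrict kappa (V - C) v = j} = (if j = i then {} else {v\<in>V. kappa v = j})" for j
      using kappa by auto
    then show "restrict kappa (V - C) \<in> proper_colourings (V - C) E (alpha(i := 0))"
      using kappa unfolding proper_colourings_def by auto
  qed
next
  show "(\<lambda>kappa. restrict (\<lambda>v. if v \<in> C then i else kappa v) V)
      \<in> proper_colourings (V - C) E (alpha(i := 0))
        \<rightarrow> {kappa \<in> proper_colourings V E alpha. {v\<in>V. kappa v = i} = C}"
  proof
    fix kappa assume kappa: "kappa \<in> proper_colourings (V - C) E (alpha(i := 0))"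
    have "i \<notin> kappa ` (V - C)"
      using proper_colouring_colour_used[OF kappa finite_Diff[OF V], of i] by simp
    then have "{v\<in>V. restrict (\<lambda>v. if v \<in> C then i else kappa v) V v = j} =
        (if j = i then C else {v\<in>V - C. kappa v = j})" for j
      using C(1) by auto
    moreover have "card {v\<in>V - C. kappa v = j} = alpha j" if "j \<noteq> i" for j
      using kappa that unfolding proper_colourings_def by auto
    ultimately show "restrict (\<lambda>v. if v \<in> C then i else kappa v) V
        \<in> {kappa \<in> proper_colourings V E alpha. {v\<in>V. kappa v = i} = C}"
      using kappa C \<open>i \<notin> kappa ` (V - C)\<close> unfolding proper_colourings_def independent_set_def
      by auto
  qed
next
  show "restrict (\<lambda>v. if v \<in> C then i else restrict kappa (V - C) v) V = kappa"
    if "kappa \<in> {kappa \<in> proper_colourings V E alpha. {v\<in>V. kappa v = i} = C}" for kappa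
    using that by (auto simp: proper_colourings_def PiE_iff extensional_def)
  show "restrict (restrict (\<lambda>v. if v \<in> C then i else kappa v) V) (V - C) = kappa"
    if "kappa \<in> proper_colourings (V - C) E (alpha(i := 0))" for kappa
    using that by (auto simp: proper_colourings_def PiE_iff extensional_def)
qed

lemma card_proper_colourings_remove_colour:
  assumes V: "finite V" and fin: "finite {i. alpha i \<noteq> 0}"
  shows "card (proper_colourings V E alpha) =
    (\<Sum>C | C \<subseteq> V \<and> card C = alpha i \<and> independent_set E C.
        card (proper_colourings (V - C) E (alpha(i := 0))))"
proof -
  let ?classes = "{C. C \<subseteq> V \<and> card C = alpha i \<and> independent_set E C}"
  let ?class = "\<lambda>kappa. {v\<in>V. kappa v = i}"
  have "?class kappa \<in> ?classes" if "kappa \<in> proper_colourings V E alpha" for kappa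
    using that colour_class_independent[OF that] by (auto simp: proper_colourings_def)
  then have classes: "?class ` proper_colourings V E alpha \<subseteq> ?classes"
    by blast
  have "finite ?classes"
    using V by (auto intro: rev_finite_subset[of "Pow V"])
  then have "card (proper_colourings V E alpha) =
      (\<Sum>C\<in>?classes. card {kappa \<in> proper_colourings V E alpha. ?class kappa = C})"
    using sum.group[OF finite_proper_colourings[OF V fin] _ classes, where h = "\<lambda>_. 1::nat"] by simp
  also have "\<dots> = (\<Sum>C\<in>?classes. card (proper_colourings (V - C) E (alpha(i := 0))))"
    using bij_betw_same_card[OF bij_betw_restrict_colour_class[OF V]] by (intro sum.cong) auto
  finally show ?thesis .
qed

section \<open>Complete multipartite graphs\<close>

text \<open>Number of proper colourings of a complete multipartite graph with parts of sizes
  \<open>ns\<close> whose colour classes, taken in order, have sizes \<open>as\<close>: each class lies in a single part.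
  The guard \<open>a \<le> ns ! p\<close> only spares the evaluation of terms with a vanishing binomial.\<close>

fun multipartite_colouring_count :: "nat list \<Rightarrow> nat list \<Rightarrow> nat" where
  "multipartite_colouring_count ns [] = (if \<forall>n\<in>set ns. n = 0 then 1 else 0)"
| "multipartite_colouring_count ns (a # as) =
     (\<Sum>p\<leftarrow>[0..<length ns]. if a \<le> ns ! p
        then (ns ! p choose a) * multipartite_colouring_count (ns[p := ns ! p - a]) as else 0)"

lemma multipartite_colouring_count_Cons:
  "multipartite_colouring_count ns (a # as) =
     (\<Sum>p<length ns. (ns ! p choose a) * multipartite_colouring_count (ns[p := ns ! p - a]) as)"
  by (simp add: atLeast_upt[symmetric] sum_list_distinct_conv_sum_set)
     (rule sum.cong, auto simp: binomial_eq_0)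

lemma multipartite_colouring_count_sum:
  "multipartite_colouring_count ns as \<noteq> 0 \<Longrightarrow> sum_list as = sum_list ns"
proof (induction as arbitrary: ns)
  case (Cons a as)
  then obtain p where p: "p < length ns" "a \<le> ns ! p"
    "multipartite_colouring_count (ns[p := ns ! p - a]) as \<noteq> 0"
    by (auto simp: multipartite_colouring_count_Cons binomial_eq_0_iff)
  then have "sum_list as = sum_list ns + (ns ! p - a) - ns ! p"
    using Cons.IH sum_list_update by metis
  moreover have "ns ! p \<le> sum_list ns"
    using p(1) by (simp add: member_le_sum_list)
  ultimately show ?case
    using p(2) by simp
qed (auto split: if_splits)

definition has_part_sizes :: "'a set \<Rightarrow> ('a \<Rightarrow> nat) \<Rightarrow> nat list \<Rightarrow> bool" where
  "has_part_sizes V P ns \<longleftrightarrow>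
     (\<forall>v\<in>V. P v < length ns) \<and> (\<forall>p<length ns. card {v\<in>V. P v = p} = ns ! p)"

lemma has_part_sizes_empty_iff:
  assumes "has_part_sizes V P ns" "finite V"
  shows "V = {} \<longleftrightarrow> (\<forall>n\<in>set ns. n = 0)"
proof
  assume "V = {}"
  then show "\<forall>n\<in>set ns. n = 0"
    using assms(1) by (auto simp: has_part_sizes_def in_set_conv_nth)
next
  assume zero: "\<forall>n\<in>set ns. n = 0"
  show "V = {}"
  proof (rule ccontr)
    assume "V \<noteq> {}"
    then obtain v where v: "v \<in> V"
      by blast
    then have "P v < length ns" "card {w\<in>V. P w = P v} = ns ! P v"
      using assms(1) by (auto simp: has_part_sizes_def)
    moreover have "card {w\<in>V. P w = P v} \<noteq> 0"
      using v assms(2) by auto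
    ultimately show False
      using zero nth_mem by fastforce
  qed
qed

lemma has_part_sizes_Diff:
  assumes parts: "has_part_sizes V P ns" and V: "finite V"
    and C: "C \<subseteq> {v\<in>V. P v = p}" and p: "p < length ns"
  shows "has_part_sizes (V - C) P (ns[p := ns ! p - card C])"
proof -
  have "card {v\<in>V - C. P v = q} = ns[p := ns ! p - card C] ! q" if q: "q < length ns" for q
  proof (cases "q = p")
    case True
    then have "{v\<in>V - C. P v = q} = {v\<in>V. P v = p} - C"
      by blast
    then show ?thesis
      using True p parts C V by (simp add: has_part_sizes_def card_Diff_subset finite_subset)
  next
    case False
    then have "{v\<in>V - C. P v = q} = {v\<in>V. P v = q}"
      using C by blast
    then show ?thesis
      using False q parts by (simp add: has_part_sizes_def)
  qed
  then show ?thesis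
    using parts by (simp add: has_part_sizes_def)
qed

lemma card_eq_sum_list_if_has_part_sizes:
  assumes parts: "has_part_sizes V P ns" and V: "finite V"
  shows "card V = sum_list ns"
proof -
  have "P ` V \<subseteq> {..<length ns}"
    using parts by (auto simp: has_part_sizes_def)
  then have "card V = (\<Sum>p<length ns. card {v\<in>V. P v = p})"
    using sum.group[OF V finite_lessThan, where h = "\<lambda>_. 1::nat"] by simp
  also have "\<dots> = (\<Sum>p<length ns. ns ! p)"
    using parts by (simp add: has_part_sizes_def)
  also have "\<dots> = sum_list ns"
    by (simp add: sum_list_sum_nth atLeast0LessThan)
  finally show ?thesis .
qed

lemma independent_sets_multipartite:
  assumes "0 < a" "\<forall>v\<in>V. P v < m"
  shows "{C. C \<subseteq> V \<and> card C = a \<and> independent_set (\<lambda>u v. P u \<noteq> P v) C} =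
    (\<Union>p<m. {C. C \<subseteq> {v\<in>V. P v = p} \<and> card C = a})"
proof (intro equalityI subsetI)
  fix C assume "C \<in> {C. C \<subseteq> V \<and> card C = a \<and> independent_set (\<lambda>u v. P u \<noteq> P v) C}"
  then have C: "C \<subseteq> V" "card C = a" "\<forall>u\<in>C. \<forall>v\<in>C. P u = P v"
    unfolding independent_set_def by blast+
  have "C \<noteq> {}"
    using C(2) assms(1) by auto
  then obtain u where "u \<in> C"
    by blast
  then have "C \<subseteq> {v\<in>V. P v = P u}" "P u < m"
    using C assms(2) by blast+
  then show "C \<in> (\<Union>p<m. {C. C \<subseteq> {v\<in>V. P v = p} \<and> card C = a})"
    using C(2) by blast
next
  fix C assume "C \<in> (\<Union>p<m. {C. C \<subseteq> {v\<in>V. P v = p} \<and> card C = a})"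
  then obtain p where "C \<subseteq> {v\<in>V. P v = p}" "card C = a"
    by blast
  then show "C \<in> {C. C \<subseteq> V \<and> card C = a \<and> independent_set (\<lambda>u v. P u \<noteq> P v) C}"
    unfolding independent_set_def by blast
qed

lemma sum_independent_sets_multipartite:
  fixes P :: "'a \<Rightarrow> nat"
  assumes a: "0 < a" and V: "finite V" and P: "\<forall>v\<in>V. P v < m"
  shows "(\<Sum>C | C \<subseteq> V \<and> card C = a \<and> independent_set (\<lambda>u v. P u \<noteq> P v) C. f C) =
    (\<Sum>p<m. \<Sum>C | C \<subseteq> {v\<in>V. P v = p} \<and> card C = a. f C)"
  unfolding independent_sets_multipartite[OF a P]
proof (intro sum.UNION_disjoint ballI impI)
  let ?part_subsets = "\<lambda>p. {C. C \<subseteq> {v\<in>V. P v = p} \<and> card C = a}"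
  show "finite (?part_subsets p)" for p
    using V by (auto intro: rev_finite_subset[of "Pow V"])
  show "?part_subsets p \<inter> ?part_subsets q = {}" if "p \<noteq> q" for p q
  proof -
    have "C = {}" if "C \<in> ?part_subsets p \<inter> ?part_subsets q" for C
      using that \<open>p \<noteq> q\<close> by blast
    moreover have "{} \<notin> ?part_subsets p"
      using a by simp
    ultimately show ?thesis
      by blast
  qed
qed simp

lemma card_proper_colourings_multipartite:
  assumes "distinct ks" "\<forall>i. alpha i \<noteq> 0 \<longleftrightarrow> i \<in> set ks"
    and "finite V" "has_part_sizes V P ns"
  shows "card (proper_colourings V (\<lambda>u v. P u \<noteq> P v) alpha) =
    multipartite_colouring_count ns (map alpha ks)"
  using assms
proof (induction ks arbitrary: alpha V ns)
  case Nil
  then have "alpha = (\<lambda>_. 0)"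
    by auto
  then show ?case
    using card_proper_colourings_zero[OF Nil.prems(3)] has_part_sizes_empty_iff[OF Nil.prems(4,3)]
    by simp
next
  case (Cons i ks)
  let ?E = "\<lambda>u v. P u \<noteq> P v"
  let ?a = "alpha i"
  have a: "0 < ?a" and fin: "finite {i. alpha i \<noteq> 0}"
    using Cons.prems(2) by auto
  have ks: "distinct ks" and supp: "\<forall>j. (alpha(i := 0)) j \<noteq> 0 \<longleftrightarrow> j \<in> set ks"
    using Cons.prems(1,2) by auto
  have map_eq: "map (alpha(i := 0)) ks = map alpha ks"
    using Cons.prems(1) by auto
  have IH: "card (proper_colourings (V - C) ?E (alpha(i := 0))) =
      multipartite_colouring_count (ns[p := ns ! p - ?a]) (map alpha ks)"
    if "p < length ns" "C \<subseteq> {v\<in>V. P v = p}" "card C = ?a" for p C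
  proof -
    have "has_part_sizes (V - C) P (ns[p := ns ! p - ?a])"
      using has_part_sizes_Diff[OF Cons.prems(4,3) that(2,1)] that(3) by simp
    from Cons.IH[OF ks supp finite_Diff[OF Cons.prems(3)] this] show ?thesis
      unfolding map_eq .
  qed
  have "card (proper_colourings V ?E alpha) =
      (\<Sum>C | C \<subseteq> V \<and> card C = ?a \<and> independent_set ?E C.
          card (proper_colourings (V - C) ?E (alpha(i := 0))))"
    by (rule card_proper_colourings_remove_colour[OF Cons.prems(3) fin])
  also have "\<dots> = (\<Sum>p<length ns. \<Sum>C | C \<subseteq> {v\<in>V. P v = p} \<and> card C = ?a.
      card (proper_colourings (V - C) ?E (alpha(i := 0))))"
    using Cons.prems(4) unfolding has_part_sizes_def
    by (intro sum_independent_sets_multipartite[OF a Cons.prems(3)]) blast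
  also have "\<dots> = (\<Sum>p<length ns.
      (ns ! p choose ?a) * multipartite_colouring_count (ns[p := ns ! p - ?a]) (map alpha ks))"
    using IH Cons.prems(3,4) by (intro sum.cong) (auto simp: has_part_sizes_def n_subsets)
  also have "\<dots> = multipartite_colouring_count ns (map alpha (i # ks))"
    by (simp only: list.map multipartite_colouring_count_Cons)
  finally show ?case .
qed

section \<open>Monomial coefficients of products of elementary symmetric functions\<close>

definition e_choices :: "nat list \<Rightarrow> (nat \<Rightarrow> nat) \<Rightarrow> nat set list set" where
  "e_choices lam alpha = {Ss :: nat set list. length Ss = length lam \<and>
      (\<forall>j<length lam. finite (Ss ! j) \<and> card (Ss ! j) = lam ! j) \<and>
      (\<forall>i. card {j. j < length lam \<and> i \<in> Ss ! j} = alpha i)}"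

lemma e_coeff_eq_card: "e_coeff lam alpha = card (e_choices lam alpha)"
  by (simp add: e_coeff_def e_choices_def)

lemma e_choice_variable_used:
  assumes "Ss \<in> e_choices lam alpha"
  shows "alpha i \<noteq> 0 \<longleftrightarrow> (\<exists>j<length lam. i \<in> Ss ! j)"
proof -
  have "alpha i = card {j. j < length lam \<and> i \<in> Ss ! j}"
    using assms by (simp add: e_choices_def)
  then show ?thesis
    by auto
qed

lemma finite_e_choices:
  assumes "finite {i. alpha i \<noteq> 0}"
  shows "finite (e_choices lam alpha)"
proof (rule finite_subset)
  show "e_choices lam alpha \<subseteq> {Ss. set Ss \<subseteq> Pow {i. alpha i \<noteq> 0} \<and> length Ss = length lam}"
  proof
    fix Ss assume Ss: "Ss \<in> e_choices lam alpha"
    then have "length Ss = length lam"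
      by (simp add: e_choices_def)
    moreover have "S \<subseteq> {i. alpha i \<noteq> 0}" if "S \<in> set Ss" for S
      using that e_choice_variable_used[OF Ss] \<open>length Ss = length lam\<close>
      by (auto simp: in_set_conv_nth)
    ultimately show "Ss \<in> {Ss. set Ss \<subseteq> Pow {i. alpha i \<noteq> 0} \<and> length Ss = length lam}"
      by blast
  qed
  show "finite {Ss. set Ss \<subseteq> Pow {i. alpha i \<noteq> 0} \<and> length Ss = length lam}"
    using assms by (intro finite_lists_length_eq) simp
qed

lemma e_choices_infinite_support:
  assumes "infinite {i. alpha i \<noteq> 0}"
  shows "e_choices lam alpha = {}"
proof (rule ccontr)
  assume "e_choices lam alpha \<noteq> {}"
  then obtain Ss where Ss: "Ss \<in> e_choices lam alpha"
    by blast
  have "{i. alpha i \<noteq> 0} \<subseteq> \<Union> (set Ss)"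
  proof
    fix i assume "i \<in> {i. alpha i \<noteq> 0}"
    then obtain j where "j < length Ss" "i \<in> Ss ! j"
      using e_choice_variable_used[OF Ss] Ss by (auto simp: e_choices_def)
    then show "i \<in> \<Union> (set Ss)"
      using nth_mem by blast
  qed
  moreover have "finite (\<Union> (set Ss))"
    using Ss by (intro finite_Union) (auto simp: e_choices_def in_set_conv_nth)
  ultimately show False
    using assms finite_subset by blast
qed

lemma card_e_choices_zero:
  "card (e_choices lam (\<lambda>_. 0)) = (if \<forall>n\<in>set lam. n = 0 then 1 else 0)"
proof -
  have empty: "Ss ! j = {}" if "Ss \<in> e_choices lam (\<lambda>_. 0)" "j < length lam" for Ss j
    using e_choice_variable_used[OF that(1)] that(2) by blast
  show ?thesis
  proof (cases "\<forall>n\<in>set lam. n = 0")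
    case True
    have "e_choices lam (\<lambda>_. 0) = {replicate (length lam) {}}"
    proof (intro equalityI subsetI)
      fix Ss assume Ss: "Ss \<in> e_choices lam (\<lambda>_. 0)"
      then have "length Ss = length lam"
        by (simp add: e_choices_def)
      then have "Ss = replicate (length lam) {}"
        using empty[OF Ss] by (intro nth_equalityI) auto
      then show "Ss \<in> {replicate (length lam) {}}"
        by simp
    next
      fix Ss :: "nat set list" assume "Ss \<in> {replicate (length lam) {}}"
      then show "Ss \<in> e_choices lam (\<lambda>_. 0)"
        using True nth_mem by (auto simp: e_choices_def)
    qed
    then show ?thesis
      using True by simp
  next
    case False
    then obtain j where j: "j < length lam" "lam ! j \<noteq> 0"
      by (auto simp: in_set_conv_nth)
    have "e_choices lam (\<lambda>_. 0) = {}"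
    proof (intro equals0I)
      fix Ss
      assume Ss: "Ss \<in> e_choices lam (\<lambda>_. 0)"
      then have "card (Ss ! j) = lam ! j"
        using j(1) by (simp add: e_choices_def)
      then show False
        using empty[OF Ss j(1)] j(2) by simp
    qed
    then show ?thesis
      using False by simp
  qed
qed

fun positive_selections :: "nat list \<Rightarrow> nat \<Rightarrow> bool list list" where
  "positive_selections [] a = (if a = 0 then [[]] else [])"
| "positive_selections (n # ns) a = map (Cons False) (positive_selections ns a) @
     (if 0 < n \<and> 0 < a then map (Cons True) (positive_selections ns (a - 1)) else [])"

lemma positive_selections_iff_list_all2:
  "bs \<in> set (positive_selections lam a) \<longleftrightarrow>
     length bs = length lam \<and> length (filter id bs) = a \<and> list_all2 (\<lambda>b n. b \<longrightarrow> 0 < n) bs lam"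
proof (induction lam arbitrary: a bs)
  case (Cons n ns)
  then show ?case
    by (cases bs) (auto simp: Suc_length_conv)
qed auto

lemma positive_selections_iff:
  "bs \<in> set (positive_selections lam a) \<longleftrightarrow>
     length bs = length lam \<and> card {j. j < length lam \<and> bs ! j} = a \<and>
     (\<forall>j<length lam. bs ! j \<longrightarrow> 0 < lam ! j)"
  unfolding positive_selections_iff_list_all2 length_filter_conv_card list_all2_conv_all_nth
  by auto

lemma distinct_positive_selections: "distinct (positive_selections lam a)"
  by (induction lam arbitrary: a) (auto simp: distinct_map)

definition decrement_selected :: "nat list \<Rightarrow> bool list \<Rightarrow> nat list" where
  "decrement_selected lam bs = map (\<lambda>(n, b). if b then n - 1 else n) (zip lam bs)"

lemma length_decrement_selected [simp]:
  "length bs = length lam \<Longrightarrow> length (decrement_selected lam bs) = length lam"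
  by (simp add: decrement_selected_def)

lemma nth_decrement_selected [simp]:
  "length bs = length lam \<Longrightarrow> j < length lam \<Longrightarrow>
     decrement_selected lam bs ! j = (if bs ! j then lam ! j - 1 else lam ! j)"
  by (simp add: decrement_selected_def)

lemma sum_decrement_selected:
  "bs \<in> set (positive_selections lam a) \<Longrightarrow> sum_list (decrement_selected lam bs) + a = sum_list lam"
proof (induction lam arbitrary: a bs)
  case (Cons n ns)
  from Cons.prems consider
      (skip) bs' where "bs = False # bs'" "bs' \<in> set (positive_selections ns a)"
    | (select) bs' where "bs = True # bs'" "0 < n" "0 < a" "bs' \<in> set (positive_selections ns (a - 1))"
    by (auto split: if_splits)
  then show ?case
  proof cases
    case skip
    then show ?thesis
      using Cons.IH[OF skip(2)] by (simp add: decrement_selected_def)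
  next
    case select
    then show ?thesis
      using Cons.IH[OF select(4)] by (simp add: decrement_selected_def)
  qed
qed (auto simp: decrement_selected_def split: if_splits)

lemma e_choice_column_in_positive_selections:
  assumes "Ss \<in> e_choices lam alpha"
  shows "map (\<lambda>S. i \<in> S) Ss \<in> set (positive_selections lam (alpha i))"
proof -
  have len: "length Ss = length lam"
    using assms by (simp add: e_choices_def)
  have "{j. j < length lam \<and> map (\<lambda>S. i \<in> S) Ss ! j} = {j. j < length lam \<and> i \<in> Ss ! j}"
    using len by auto
  moreover have "0 < lam ! j" if "j < length lam" "i \<in> Ss ! j" for j
  proof -
    have "finite (Ss ! j)" "card (Ss ! j) = lam ! j"
      using assms that(1) by (auto simp: e_choices_def)
    then show ?thesis
      using that(2) card_gt_0_iff by fastforce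
  qed
  ultimately show ?thesis
    using assms len by (auto simp: positive_selections_iff e_choices_def)
qed

lemma e_choices_remove_variable:
  assumes "Ss \<in> e_choices lam alpha"
  shows "map (\<lambda>S. S - {i}) Ss \<in> e_choices (decrement_selected lam (map (\<lambda>S. i \<in> S) Ss)) (alpha(i := 0))"
proof -
  have len: "length Ss = length lam"
    using assms by (simp add: e_choices_def)
  have "{j. j < length lam \<and> k \<in> map (\<lambda>S. S - {i}) Ss ! j} =
      (if k = i then {} else {j. j < length lam \<and> k \<in> Ss ! j})" for k
    using len by auto
  then show ?thesis
    using assms len by (auto simp: e_choices_def card_Diff_singleton_if)
qed

lemma e_choices_insert_variable:
  assumes Ss: "Ss \<in> e_choices (decrement_selected lam bs) (alpha(i := 0))"
    and bs: "bs \<in> set (positive_selections lam (alpha i))"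
  shows "map2 (\<lambda>S b. if b then insert i S else S) Ss bs \<in> e_choices lam alpha"
proof -
  have len: "length bs = length lam" "length Ss = length lam"
    using Ss bs by (auto simp: e_choices_def positive_selections_iff)
  have i: "i \<notin> Ss ! j" if "j < length lam" for j
    using e_choice_variable_used[OF Ss, of i] that len by simp
  have "{j. j < length lam \<and> k \<in> map2 (\<lambda>S b. if b then insert i S else S) Ss bs ! j} =
      (if k = i then {j. j < length lam \<and> bs ! j} else {j. j < length lam \<and> k \<in> Ss ! j})" for k
    using len i by (auto split: if_splits)
  then show ?thesis
    using Ss bs len i by (auto simp: e_choices_def positive_selections_iff)
qed

lemma bij_betw_remove_variable:
  assumes bs: "bs \<in> set (positive_selections lam (alpha i))"
  shows "bij_betw (map (\<lambda>S. S - {i}))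
           {Ss \<in> e_choices lam alpha. map (\<lambda>S. i \<in> S) Ss = bs}
           (e_choices (decrement_selected lam bs) (alpha(i := 0)))"
proof (rule bij_betwI[where g = "\<lambda>Ss. map2 (\<lambda>S b. if b then insert i S else S) Ss bs"])
  have len: "length bs = length lam"
    using bs by (simp add: positive_selections_iff)
  have i: "i \<notin> Ss ! j"
    if "Ss \<in> e_choices (decrement_selected lam bs) (alpha(i := 0))" "j < length lam" for Ss j
    using e_choice_variable_used[OF that(1), of i] that(2) len by simp
  show "map (\<lambda>S. S - {i}) \<in> {Ss \<in> e_choices lam alpha. map (\<lambda>S. i \<in> S) Ss = bs}
      \<rightarrow> e_choices (decrement_selected lam bs) (alpha(i := 0))"
    using e_choices_remove_variable by blast
  show "(\<lambda>Ss. map2 (\<lambda>S b. if b then insert i S else S) Ss bs)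
      \<in> e_choices (decrement_selected lam bs) (alpha(i := 0))
        \<rightarrow> {Ss \<in> e_choices lam alpha. map (\<lambda>S. i \<in> S) Ss = bs}"
  proof
    fix Ss assume Ss: "Ss \<in> e_choices (decrement_selected lam bs) (alpha(i := 0))"
    then have "length Ss = length lam"
      using len by (simp add: e_choices_def)
    then have "map (\<lambda>S. i \<in> S) (map2 (\<lambda>S b. if b then insert i S else S) Ss bs) = bs"
      using len i[OF Ss] by (intro nth_equalityI) auto
    then show "map2 (\<lambda>S b. if b then insert i S else S) Ss bs
        \<in> {Ss \<in> e_choices lam alpha. map (\<lambda>S. i \<in> S) Ss = bs}"
      using e_choices_insert_variable[OF Ss bs] by blast
  qed
  show "map2 (\<lambda>S b. if b then insert i S else S) (map (\<lambda>S. S - {i}) Ss) bs = Ss"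
    if "Ss \<in> {Ss \<in> e_choices lam alpha. map (\<lambda>S. i \<in> S) Ss = bs}" for Ss
    using that by (intro nth_equalityI) (auto simp: e_choices_def)
  show "map (\<lambda>S. S - {i}) (map2 (\<lambda>S b. if b then insert i S else S) Ss bs) = Ss"
    if "Ss \<in> e_choices (decrement_selected lam bs) (alpha(i := 0))" for Ss
    using that len i[OF that] by (intro nth_equalityI) (auto simp: e_choices_def)
qed

lemma card_e_choices_remove_variable:
  assumes fin: "finite {i. alpha i \<noteq> 0}"
  shows "card (e_choices lam alpha) =
    (\<Sum>bs\<in>set (positive_selections lam (alpha i)).
        card (e_choices (decrement_selected lam bs) (alpha(i := 0))))"
proof -
  let ?selection = "map (\<lambda>S. i \<in> S)"
  have selections: "?selection ` e_choices lam alpha \<subseteq> set (positive_selections lam (alpha i))"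
    using e_choice_column_in_positive_selections by blast
  then have "card (e_choices lam alpha) =
      (\<Sum>bs\<in>set (positive_selections lam (alpha i)).
          card {Ss \<in> e_choices lam alpha. ?selection Ss = bs})"
    using sum.group[OF finite_e_choices[OF fin] finite_set selections, where h = "\<lambda>_. 1::nat"] by simp
  also have "\<dots> = (\<Sum>bs\<in>set (positive_selections lam (alpha i)).
      card (e_choices (decrement_selected lam bs) (alpha(i := 0))))"
    using bij_betw_same_card[OF bij_betw_remove_variable] by (intro sum.cong) auto
  finally show ?thesis .
qed

fun e_choice_count :: "nat list \<Rightarrow> nat list \<Rightarrow> nat" where
  "e_choice_count lam [] = (if \<forall>n\<in>set lam. n = 0 then 1 else 0)"
| "e_choice_count lam (a # as) =
     (\<Sum>bs\<leftarrow>positive_selections lam a. e_choice_count (decrement_selected lam bs) as)"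

lemma card_e_choices_eq_count:
  assumes "distinct ks" "\<forall>i. alpha i \<noteq> 0 \<longleftrightarrow> i \<in> set ks"
  shows "card (e_choices lam alpha) = e_choice_count lam (map alpha ks)"
  using assms
proof (induction ks arbitrary: alpha lam)
  case Nil
  then have "alpha = (\<lambda>_. 0)"
    by auto
  then show ?case
    by (simp add: card_e_choices_zero)
next
  case (Cons i ks)
  have fin: "finite {i. alpha i \<noteq> 0}"
    using Cons.prems(2) by (simp add: finite_subset)
  have supp: "\<forall>j. (alpha(i := 0)) j \<noteq> 0 \<longleftrightarrow> j \<in> set ks"
    using Cons.prems(1,2) by auto
  have map_eq: "map (alpha(i := 0)) ks = map alpha ks"
    using Cons.prems(1) by auto
  have "distinct ks"
    using Cons.prems(1) by simp
  note IH = Cons.IH[OF this supp, unfolded map_eq]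
  have "card (e_choices lam alpha) =
      (\<Sum>bs\<in>set (positive_selections lam (alpha i)).
          e_choice_count (decrement_selected lam bs) (map alpha ks))"
    unfolding card_e_choices_remove_variable[OF fin, of lam i] IH ..
  also have "\<dots> = e_choice_count lam (map alpha (i # ks))"
    by (simp add: sum_list_distinct_conv_sum_set[OF distinct_positive_selections])
  finally show ?case .
qed

lemma e_choice_count_sum:
  "e_choice_count lam as \<noteq> 0 \<Longrightarrow> sum_list as = sum_list lam"
proof (induction as arbitrary: lam)
  case (Cons a as)
  then obtain bs where "bs \<in> set (positive_selections lam a)"
    "e_choice_count (decrement_selected lam bs) as \<noteq> 0"
    by auto
  then show ?case
    using Cons.IH sum_decrement_selected by fastforce
qed (auto split: if_splits)

section \<open>Checking \<open>e\<close>-positivity on compositions\<close>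

fun bounded_compositions :: "nat \<Rightarrow> nat \<Rightarrow> nat list list" where
  "bounded_compositions 0 n = (if n = 0 then [[]] else [])"
| "bounded_compositions (Suc f) n = (if n = 0 then [[]]
     else concat (map (\<lambda>k. map (Cons k) (bounded_compositions f (n - k))) [1..<Suc n]))"

lemma length_le_sum_list: "\<forall>x\<in>set xs. 0 < (x::nat) \<Longrightarrow> length xs \<le> sum_list xs"
  by (induction xs) auto

lemma mem_bounded_compositions:
  "\<forall>x\<in>set xs. 0 < x \<Longrightarrow> sum_list xs = n \<Longrightarrow> length xs \<le> f \<Longrightarrow> xs \<in> set (bounded_compositions f n)"
proof (induction xs arbitrary: n f)
  case Nil
  then show ?case
    by (cases f) auto
next
  case (Cons x xs)
  then obtain f' where "f = Suc f'"
    by (cases f) auto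
  moreover have "xs \<in> set (bounded_compositions f' (n - x))"
    using Cons \<open>f = Suc f'\<close> by (intro Cons.IH) auto
  moreover have "0 < x" "x \<le> n"
    using Cons.prems by auto
  ultimately show ?case
    by (cases "x = n") auto
qed

definition alist_coeff :: "(nat list \<times> int) list \<Rightarrow> nat list \<Rightarrow> int" where
  "alist_coeff L mu = (\<Sum>(m, v)\<leftarrow>L. if m = mu then v else 0)"

lemma sum_alist_coeff:
  assumes "finite P" "fst ` set L \<subseteq> P"
  shows "(\<Sum>mu\<in>P. alist_coeff L mu * f mu) = (\<Sum>(m, v)\<leftarrow>L. v * f m)"
  using assms(2)
proof (induction L)
  case Nil
  then show ?case
    by (simp add: alist_coeff_def)
next
  case (Cons mv L)
  obtain m v where mv: "mv = (m, v)"
    by fastforce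
  have "alist_coeff (mv # L) mu * f mu = (if m = mu then v * f mu else 0) + alist_coeff L mu * f mu"
    for mu
    by (simp add: alist_coeff_def mv distrib_right)
  then have "(\<Sum>mu\<in>P. alist_coeff (mv # L) mu * f mu) =
      (\<Sum>mu\<in>P. (if m = mu then v * f mu else 0)) + (\<Sum>mu\<in>P. alist_coeff L mu * f mu)"
    by (simp only: sum.distrib)
  also have "\<dots> = v * f m + (\<Sum>(m, v)\<leftarrow>L. v * f m)"
    using Cons assms(1) mv by simp
  finally show ?case
    by (simp add: mv)
qed

lemma alist_coeff_nonneg: "\<forall>(m, v)\<in>set L. 0 \<le> v \<Longrightarrow> 0 \<le> alist_coeff L mu"
  unfolding alist_coeff_def by (induction L) auto

lemma finite_partitions: "finite (partitions n)"
proof (rule finite_subset)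
  show "partitions n \<subseteq> {xs. set xs \<subseteq> {..n} \<and> length xs \<le> n}"
    using member_le_sum_list length_le_sum_list by (fastforce simp: partitions_def)
  show "finite {xs. set xs \<subseteq> {..n} \<and> length xs \<le> n}"
    by (rule finite_lists_length_le) simp
qed

lemma multipartite_expansion_from_compositions:
  assumes check: "\<forall>xs\<in>set (bounded_compositions (sum_list ns) (sum_list ns)).
      int (multipartite_colouring_count ns xs) = (\<Sum>(mu, v)\<leftarrow>L. v * int (e_choice_count mu xs))"
    and L: "\<forall>(mu, v)\<in>set L. sum_list mu = sum_list ns"
    and xs: "\<forall>x\<in>set xs. 0 < x"
  shows "int (multipartite_colouring_count ns xs) = (\<Sum>(mu, v)\<leftarrow>L. v * int (e_choice_count mu xs))"
proof (cases "sum_list xs = sum_list ns")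
  case True
  then show ?thesis
    using check mem_bounded_compositions[OF xs True] length_le_sum_list[OF xs] by simp
next
  case False
  then have count: "multipartite_colouring_count ns xs = 0"
    using multipartite_colouring_count_sum by blast
  have "e_choice_count mu xs = 0" if "(mu, v) \<in> set L" for mu v
    using L that False e_choice_count_sum by fastforce
  then have "(\<Sum>(mu, v)\<leftarrow>L. v * int (e_choice_count mu xs)) = (\<Sum>_\<leftarrow>L. 0)"
    by (intro arg_cong[where f = sum_list] map_cong) auto
  then show ?thesis
    using count by simp
qed

lemma e_positive_multipartite_from_compositions:
  assumes V: "finite V" and parts: "has_part_sizes V P ns"
    and check: "\<forall>xs\<in>set (bounded_compositions (sum_list ns) (sum_list ns)).
      int (multipartite_colouring_count ns xs) = (\<Sum>(mu, v)\<leftarrow>L. v * int (e_choice_count mu xs))"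
    and L: "\<forall>(mu, v)\<in>set L. mu \<in> partitions (sum_list ns) \<and> 0 \<le> v"
  shows "e_positive V (\<lambda>u v. P u \<noteq> P v)"
  unfolding e_positive_def card_eq_sum_list_if_has_part_sizes[OF parts V]
proof (intro exI[of _ "alist_coeff L"] conjI allI ballI)
  show "0 \<le> alist_coeff L mu" for mu
    using L by (intro alist_coeff_nonneg) auto
next
  fix alpha :: "nat \<Rightarrow> nat"
  have sum_L: "(\<Sum>mu\<in>partitions (sum_list ns). alist_coeff L mu * f mu) = (\<Sum>(mu, v)\<leftarrow>L. v * f mu)"
    for f
    using L by (intro sum_alist_coeff finite_partitions) auto
  show "int (chrom_coeff V (\<lambda>u v. P u \<noteq> P v) alpha) =
      (\<Sum>mu\<in>partitions (sum_list ns). alist_coeff L mu * int (e_coeff mu alpha))"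
  proof (cases "finite {i. alpha i \<noteq> 0}")
    case False
    then show ?thesis
      using sum_L
      by (simp add: chrom_coeff_eq_card proper_colourings_infinite_support[OF V]
          e_coeff_eq_card e_choices_infinite_support)
  next
    case True
    define ks where "ks = sorted_list_of_set {i. alpha i \<noteq> 0}"
    have ks: "distinct ks" "\<forall>i. alpha i \<noteq> 0 \<longleftrightarrow> i \<in> set ks"
      using True by (auto simp: ks_def)
    have "\<forall>x\<in>set (map alpha ks). 0 < x"
      using ks by auto
    moreover have "\<forall>(mu, v)\<in>set L. sum_list mu = sum_list ns"
      using L by (auto simp: partitions_def)
    ultimately show ?thesis
      using multipartite_expansion_from_compositions[OF check] sum_L
      by (simp add: chrom_coeff_eq_card card_proper_colourings_multipartite[OF ks V parts]
          e_coeff_eq_card card_e_choices_eq_count[OF ks])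
  qed
qed

section \<open>Monotonicity of Kostka numbers\<close>

lemma finite_cells: "finite (cells lam)"
proof (rule finite_subset)
  show "cells lam \<subseteq> {..<length lam} \<times> {..<Suc (sum_list lam)}"
  proof
    fix c assume "c \<in> cells lam"
    then obtain i j where c: "c = (i, j)" "i < length lam" "j < lam ! i"
      by (auto simp: cells_def)
    then have "lam ! i \<le> sum_list lam"
      by (simp add: member_le_sum_list)
    then show "c \<in> {..<length lam} \<times> {..<Suc (sum_list lam)}"
      using c by auto
  qed
qed simp

lemma cells_left: "(i, j') \<in> cells lam \<Longrightarrow> j \<le> j' \<Longrightarrow> (i, j) \<in> cells lam"
  by (auto simp: cells_def)

lemma ssyt_rowD: "T \<in> ssyt lam alpha \<Longrightarrow> (i, Suc j) \<in> cells lam \<Longrightarrow> T (i, j) \<le> T (i, Suc j)"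
  by (simp add: ssyt_def)

lemma ssyt_colD: "T \<in> ssyt lam alpha \<Longrightarrow> (Suc i, j) \<in> cells lam \<Longrightarrow> T (i, j) < T (Suc i, j)"
  by (simp add: ssyt_def)

lemma ssyt_contentD: "T \<in> ssyt lam alpha \<Longrightarrow> card {c \<in> cells lam. T c = k} = alpha k"
  by (simp add: ssyt_def)

lemma finite_ssyt:
  assumes "finite {k. beta k \<noteq> 0}"
  shows "finite (ssyt lam beta)"
proof (rule finite_subset)
  show "ssyt lam beta \<subseteq> cells lam \<rightarrow>\<^sub>E {k. beta k \<noteq> 0}"
  proof
    fix T assume T: "T \<in> ssyt lam beta"
    have "T c \<in> {k. beta k \<noteq> 0}" if "c \<in> cells lam" for c
    proof -
      have "finite {c' \<in> cells lam. T c' = T c}" "c \<in> {c' \<in> cells lam. T c' = T c}"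
        using that finite_cells[of lam] by simp_all
      then have "card {c' \<in> cells lam. T c' = T c} \<noteq> 0"
        by (metis card_0_eq empty_iff)
      then show ?thesis
        using ssyt_contentD[OF T] by simp
    qed
    moreover have "T \<in> cells lam \<rightarrow>\<^sub>E UNIV"
      using T by (simp add: ssyt_def)
    ultimately show "T \<in> cells lam \<rightarrow>\<^sub>E {k. beta k \<noteq> 0}"
      by (auto simp: PiE_iff)
  qed
  show "finite (cells lam \<rightarrow>\<^sub>E {k. beta k \<noteq> 0})"
    using finite_cells assms by (rule finite_PiE)
qed

lemma ssyt_row_mono:
  assumes T: "T \<in> ssyt lam alpha" and "(i, j') \<in> cells lam" "j \<le> j'"
  shows "T (i, j) \<le> T (i, j')"
  using assms(3,2)
proof (induction j' rule: dec_induct)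
  case (step m)
  then have "T (i, j) \<le> T (i, m)"
    using cells_left[of i "Suc m" lam m] by simp
  also have "\<dots> \<le> T (i, Suc m)"
    using ssyt_rowD[OF T step.prems] .
  finally show ?case .
qed simp

lemma ssyt_zero_first_row:
  assumes "T \<in> ssyt lam alpha" "(i, j) \<in> cells lam" "T (i, j) = 0"
  shows "i = 0"
proof (cases i)
  case (Suc i')
  then show ?thesis
    using ssyt_colD[of T lam alpha i' j] assms by simp
qed simp

lemma ssyt_zeros:
  assumes T: "T \<in> ssyt lam alpha"
  shows "{c \<in> cells lam. T c = 0} = {0} \<times> {..<alpha 0}"
proof -
  let ?Z = "{c \<in> cells lam. T c = 0}"
  have card_Z: "card ?Z = alpha 0"
    using ssyt_contentD[OF T] .
  have prefix: "{0} \<times> {..j} \<subseteq> ?Z" if "(0, j) \<in> ?Z" for j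
    using that ssyt_row_mono[OF T] cells_left by fastforce
  have "?Z \<subseteq> {0} \<times> {..<alpha 0}"
  proof
    fix c assume c: "c \<in> ?Z"
    then obtain j where j: "c = (0, j)"
      using ssyt_zero_first_row[OF T] by (cases c) fastforce
    have "card ({0::nat} \<times> {..j}) \<le> card ?Z"
      using prefix c j finite_cells by (intro card_mono) auto
    then show "c \<in> {0} \<times> {..<alpha 0}"
      using card_Z j by (simp add: card_cartesian_product)
  qed
  then show ?thesis
    using card_Z finite_cells by (intro card_subset_eq) (auto simp: card_cartesian_product)
qed

lemma ssyt_zero_iff:
  "T \<in> ssyt lam alpha \<Longrightarrow> (i, j) \<in> cells lam \<and> T (i, j) = 0 \<longleftrightarrow> i = 0 \<and> j < alpha 0"
  using ssyt_zeros[unfolded set_eq_iff, rule_format, of T lam alpha "(i, j)"] by auto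

lemma ssyt_below_last_zero:
  assumes T: "T \<in> ssyt lam alpha" and a: "alpha 1 < alpha 0" and c: "(1, alpha 0 - 1) \<in> cells lam"
  shows "1 < T (1, alpha 0 - 1)"
proof -
  have pos: "T (1, j) \<noteq> 0" if "(1, j) \<in> cells lam" for j
    using ssyt_zero_first_row[OF T that] by auto
  have "T (1, alpha 0 - 1) \<noteq> 1"
  proof
    assume one: "T (1, alpha 0 - 1) = 1"
    have "{1} \<times> {..<alpha 0} \<subseteq> {c \<in> cells lam. T c = 1}"
    proof
      fix c assume "c \<in> {1::nat} \<times> {..<alpha 0}"
      then obtain j where j: "c = (1, j)" "j \<le> alpha 0 - 1"
        by auto
      then have "(1, j) \<in> cells lam"
        using cells_left[OF c] by simp
      then show "c \<in> {c \<in> cells lam. T c = 1}"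
        using ssyt_row_mono[OF T c j(2)] one pos j(1) by fastforce
    qed
    then have "card ({1::nat} \<times> {..<alpha 0}) \<le> card {c \<in> cells lam. T c = 1}"
      using finite_cells by (intro card_mono) auto
    then show False
      using a ssyt_contentD[OF T, of 1] by (simp add: card_cartesian_product)
  qed
  then show ?thesis
    using pos[OF c] by simp
qed

lemma shift_last_zero_rowD:
  assumes T: "T \<in> ssyt lam alpha" and a: "0 < alpha 0" and ij: "(i, Suc j) \<in> cells lam"
  shows "(T((0, alpha 0 - 1) := 1)) (i, j) \<le> (T((0, alpha 0 - 1) := 1)) (i, Suc j)"
proof -
  let ?c = "(0::nat, alpha 0 - 1)"
  consider "(i, j) = ?c" | "(i, Suc j) = ?c" | "(i, j) \<noteq> ?c" "(i, Suc j) \<noteq> ?c"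
    by blast
  then show ?thesis
  proof cases
    case 1
    then have "T (i, Suc j) \<noteq> 0"
      using ssyt_zero_iff[OF T, of i "Suc j"] ij a by auto
    then show ?thesis
      using 1 by auto
  next
    case 2
    then have "T (i, j) = 0"
      using ssyt_zero_iff[OF T, of i j] cells_left[OF ij] by auto
    then show ?thesis
      using 2 by auto
  next
    case 3
    show ?thesis
      unfolding fun_upd_other[OF 3(1)] fun_upd_other[OF 3(2)] by (rule ssyt_rowD[OF T ij])
  qed
qed

lemma shift_last_zero_colD:
  assumes T: "T \<in> ssyt lam alpha" and a: "alpha 1 < alpha 0" and ij: "(Suc i, j) \<in> cells lam"
  shows "(T((0, alpha 0 - 1) := 1)) (i, j) < (T((0, alpha 0 - 1) := 1)) (Suc i, j)"
proof (cases "(i, j) = (0, alpha 0 - 1)")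
  case True
  then show ?thesis
    using ssyt_below_last_zero[OF T a] ij by auto
next
  case False
  have below: "(Suc i, j) \<noteq> (0, alpha 0 - 1)"
    by simp
  show ?thesis
    unfolding fun_upd_other[OF False] fun_upd_other[OF below] by (rule ssyt_colD[OF T ij])
qed

lemma shift_last_zero_content:
  assumes T: "T \<in> ssyt lam alpha" and a: "0 < alpha 0"
    and beta: "beta 0 + 1 = alpha 0" "beta 1 = alpha 1 + 1" "\<And>k. k \<noteq> 0 \<Longrightarrow> k \<noteq> 1 \<Longrightarrow> beta k = alpha k"
  shows "card {c \<in> cells lam. (T((0, alpha 0 - 1) := 1)) c = k} = beta k"
proof -
  let ?c = "(0::nat, alpha 0 - 1)"
  have c: "?c \<in> cells lam" "T ?c = 0"
    using ssyt_zero_iff[OF T, of 0 "alpha 0 - 1"] a by auto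
  consider "k = 0" | "k = 1" | "k \<noteq> 0" "k \<noteq> 1"
    by blast
  then show ?thesis
  proof cases
    case 1
    then have "{c \<in> cells lam. (T(?c := 1)) c = k} = {c \<in> cells lam. T c = 0} - {?c}"
      by auto
    then show ?thesis
      using 1 c finite_cells ssyt_contentD[OF T, of 0] beta(1) by (simp add: card_Diff_singleton)
  next
    case 2
    then have "{c \<in> cells lam. (T(?c := 1)) c = k} = insert ?c {c \<in> cells lam. T c = 1}"
      using c by auto
    then show ?thesis
      using 2 c finite_cells ssyt_contentD[OF T, of 1] beta(2) by simp
  next
    case 3
    then have "{c \<in> cells lam. (T(?c := 1)) c = k} = {c \<in> cells lam. T c = k}"
      using c by auto
    then show ?thesis
      using 3 ssyt_contentD[OF T, of k] beta(3) by simp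
  qed
qed

lemma ssyt_shift_last_zero:
  assumes T: "T \<in> ssyt lam alpha" and a: "alpha 1 < alpha 0"
    and beta: "beta 0 + 1 = alpha 0" "beta 1 = alpha 1 + 1" "\<And>k. k \<noteq> 0 \<Longrightarrow> k \<noteq> 1 \<Longrightarrow> beta k = alpha k"
  shows "T((0, alpha 0 - 1) := 1) \<in> ssyt lam beta"
proof -
  have a0: "0 < alpha 0"
    using a by simp
  have "(0, alpha 0 - 1) \<in> cells lam"
    using ssyt_zero_iff[OF T, of 0 "alpha 0 - 1"] a0 by auto
  then have "T((0, alpha 0 - 1) := 1) \<in> cells lam \<rightarrow>\<^sub>E UNIV"
    using T by (auto simp: ssyt_def PiE_iff extensional_def)
  then show ?thesis
    using shift_last_zero_rowD[OF T a0] shift_last_zero_colD[OF T a]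
      shift_last_zero_content[OF T a0 beta] by (simp add: ssyt_def)
qed

lemma card_ssyt_shift_mono:
  assumes a: "alpha 1 < alpha 0" and fin: "finite {k. beta k \<noteq> 0}"
    and beta: "beta 0 + 1 = alpha 0" "beta 1 = alpha 1 + 1" "\<And>k. k \<noteq> 0 \<Longrightarrow> k \<noteq> 1 \<Longrightarrow> beta k = alpha k"
  shows "card (ssyt lam alpha) \<le> card (ssyt lam beta)"
proof (rule card_inj_on_le)
  let ?c = "(0::nat, alpha 0 - 1)"
  show "inj_on (\<lambda>T. T(?c := 1)) (ssyt lam alpha)"
  proof (rule inj_onI)
    fix T1 T2 assume T: "T1 \<in> ssyt lam alpha" "T2 \<in> ssyt lam alpha" and eq: "T1(?c := 1) = T2(?c := 1)"
    have "T1 ?c = 0" "T2 ?c = 0"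
      using ssyt_zero_iff[OF T(1), of 0 "alpha 0 - 1"] ssyt_zero_iff[OF T(2), of 0 "alpha 0 - 1"] a
      by auto
    then show "T1 = T2"
      using eq by (metis fun_upd_triv fun_upd_upd)
  qed
  show "(\<lambda>T. T(?c := 1)) ` ssyt lam alpha \<subseteq> ssyt lam beta"
    using ssyt_shift_last_zero[OF _ a beta] by blast
  show "finite (ssyt lam beta)"
    using finite_ssyt[OF fin] .
qed

lemma schur_positive_chrom_coeff_mono:
  assumes sp: "schur_positive V E" and a: "alpha 1 < alpha 0" and fin: "finite {k. beta k \<noteq> 0}"
    and beta: "beta 0 + 1 = alpha 0" "beta 1 = alpha 1 + 1" "\<And>k. k \<noteq> 0 \<Longrightarrow> k \<noteq> 1 \<Longrightarrow> beta k = alpha k"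
  shows "chrom_coeff V E alpha \<le> chrom_coeff V E beta"
proof -
  obtain c :: "nat list \<Rightarrow> int" where c: "\<forall>mu\<in>partitions (card V). 0 \<le> c mu"
    and expansion: "\<And>alpha. int (chrom_coeff V E alpha) =
        (\<Sum>mu\<in>partitions (card V). c mu * int (s_coeff mu alpha))"
    using sp unfolding schur_positive_def by blast
  have "(\<Sum>mu\<in>partitions (card V). c mu * int (s_coeff mu alpha)) \<le>
      (\<Sum>mu\<in>partitions (card V). c mu * int (s_coeff mu beta))"
    using c card_ssyt_shift_mono[OF a fin beta]
    by (intro sum_mono mult_left_mono) (auto simp: s_coeff_def)
  then show ?thesis
    unfolding expansion[symmetric] by simp
qed

definition list_exponent :: "nat list \<Rightarrow> nat \<Rightarrow> nat" where
  "list_exponent xs i = (if i < length xs then xs ! i else 0)"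

lemma finite_support_list_exponent: "finite {i. list_exponent xs i \<noteq> 0}"
  by (rule finite_subset[of _ "{..<length xs}"]) (auto simp: list_exponent_def)

lemma not_schur_positive_if_shift_vanishes:
  assumes "chrom_coeff V E (list_exponent xs) \<noteq> 0"
    and "chrom_coeff V E (list_exponent (xs[0 := xs ! 0 - 1, 1 := xs ! 1 + 1])) = 0"
    and "xs ! 1 < xs ! 0" "2 \<le> length xs"
  shows "\<not> schur_positive V E"
proof
  assume "schur_positive V E"
  then have "chrom_coeff V E (list_exponent xs) \<le>
      chrom_coeff V E (list_exponent (xs[0 := xs ! 0 - 1, 1 := xs ! 1 + 1]))"
    using assms(3,4) finite_support_list_exponent
    by (intro schur_positive_chrom_coeff_mono) (auto simp: list_exponent_def nth_list_update)
  then show False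
    using assms(1,2) by simp
qed

section \<open>Complete tripartite graphs\<close>

lemma finite_tri_V: "finite (tri_V r s t)"
  by (rule finite_subset[of _ "{..2} \<times> {..<r + s + t}"]) (auto simp: tri_V_def)

lemma has_part_sizes_tri_V: "has_part_sizes (tri_V r s t) fst [r, s, t]"
proof -
  have "{v\<in>tri_V r s t. fst v = p} = {p} \<times> {..<[r, s, t] ! p}" if "p < 3" for p
    using that by (auto simp: tri_V_def less_Suc_eq numeral_eq_Suc)
  then show ?thesis
    by (auto simp: has_part_sizes_def tri_V_def card_cartesian_product)
qed

lemma chrom_coeff_tri_V:
  assumes ns: "mset ns = mset [r, s, t]" and "distinct ks" "\<forall>i. alpha i \<noteq> 0 \<longleftrightarrow> i \<in> set ks"
  shows "chrom_coeff (tri_V r s t) tri_E alpha = multipartite_colouring_count ns (map alpha ks)"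
proof -
  obtain \<sigma> where \<sigma>: "\<sigma> permutes {..<length [r, s, t]}" "permute_list \<sigma> [r, s, t] = ns"
    using mset_eq_permutation[OF ns] .
  have \<sigma>': "inv \<sigma> permutes {..<length [r, s, t]}"
    using permutes_inv[OF \<sigma>(1)] .
  have E: "tri_E = (\<lambda>u v. inv \<sigma> (fst u) \<noteq> inv \<sigma> (fst v))"
    using permutes_inj[OF \<sigma>'] by (simp add: tri_E_def fun_eq_iff inj_eq)
  have len: "length ns = length [r, s, t]"
    using mset_eq_length[OF ns] .
  have parts: "has_part_sizes (tri_V r s t) (\<lambda>v. inv \<sigma> (fst v)) ns"
    unfolding has_part_sizes_def len
  proof (intro conjI ballI allI impI)
    fix v assume "v \<in> tri_V r s t"
    then have "fst v \<in> {..<length [r, s, t]}"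
      using has_part_sizes_tri_V unfolding has_part_sizes_def by blast
    then show "inv \<sigma> (fst v) < length [r, s, t]"
      using permutes_in_image[OF \<sigma>'] by blast
  next
    fix p assume p: "p < length [r, s, t]"
    have "{v\<in>tri_V r s t. inv \<sigma> (fst v) = p} = {v\<in>tri_V r s t. fst v = \<sigma> p}"
      by (intro Collect_cong conj_cong refl) (auto simp: permutes_inv_eq[OF \<sigma>(1)])
    also have "card \<dots> = [r, s, t] ! \<sigma> p"
      using has_part_sizes_tri_V permutes_in_image[OF \<sigma>(1), of p] p
      unfolding has_part_sizes_def by blast
    also have "\<dots> = ns ! p"
      using permute_list_nth[OF \<sigma>(1) p] \<sigma>(2) by simp
    finally show "card {v\<in>tri_V r s t. inv \<sigma> (fst v) = p} = ns ! p" .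
  qed
  show ?thesis
    unfolding chrom_coeff_eq_card E
    by (rule card_proper_colourings_multipartite[OF assms(2,3) finite_tri_V parts])
qed

lemma chrom_coeff_tri_V_list_exponent:
  assumes "mset ns = mset [r, s, t]" "\<forall>x\<in>set xs. 0 < x"
  shows "chrom_coeff (tri_V r s t) tri_E (list_exponent xs) = multipartite_colouring_count ns xs"
proof -
  have "map (list_exponent xs) [0..<length xs] = xs"
    by (rule nth_equalityI) (auto simp: list_exponent_def)
  moreover have "\<forall>i. list_exponent xs i \<noteq> 0 \<longleftrightarrow> i \<in> set [0..<length xs]"
    using assms(2) by (auto simp: list_exponent_def)
  ultimately show ?thesis
    using chrom_coeff_tri_V[OF assms(1) distinct_upt] by metis
qed

lemma e_positive_tri_V_from_compositions:
  assumes "\<forall>xs\<in>set (bounded_compositions (r + s + t) (r + s + t)).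
      int (multipartite_colouring_count [r, s, t] xs) = (\<Sum>(mu, v)\<leftarrow>L. v * int (e_choice_count mu xs))"
    and "\<forall>(mu, v)\<in>set L. mu \<in> partitions (r + s + t) \<and> 0 \<le> v"
  shows "e_positive (tri_V r s t) tri_E"
  using e_positive_multipartite_from_compositions[OF finite_tri_V has_part_sizes_tri_V] assms
  by (simp add: tri_E_def[abs_def] add.assoc)

lemma e_positive_K111: "e_positive (tri_V 1 1 1) tri_E"
  by (rule e_positive_tri_V_from_compositions[where L = "[([3], 6)]"])
    (code_simp, auto simp: partitions_def)

lemma e_positive_K112: "e_positive (tri_V 1 1 2) tri_E"
  by (rule e_positive_tri_V_from_compositions[where L = "[([4], 16), ([3, 1], 2)]"])
    (code_simp, auto simp: partitions_def)

lemma e_positive_K122: "e_positive (tri_V 1 2 2) tri_E"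
  by (rule e_positive_tri_V_from_compositions[where L = "[([5], 70), ([4, 1], 6), ([3, 2], 2)]"])
    (code_simp, auto simp: partitions_def)

lemma e_positive_K222: "e_positive (tri_V 2 2 2) tri_E"
  by (rule e_positive_tri_V_from_compositions[where L = "[([6], 384), ([5, 1], 36), ([3, 3], 6)]"])
    (code_simp, auto simp: partitions_def)

lemma e_positive_K223: "e_positive (tri_V 2 2 3) tri_E"
  by (rule e_positive_tri_V_from_compositions[where
        L = "[([7], 1988), ([6, 1], 268), ([5, 2], 12), ([5, 1, 1], 12), ([4, 3], 4), ([3, 3, 1], 2)]"])
    (code_simp, auto simp: partitions_def)

lemma multipartite_colouring_count_3_Cons:
  "multipartite_colouring_count [r, s, t] (x # xs) =
     (if x \<le> r then (r choose x) * multipartite_colouring_count [r - x, s, t] xs else 0) +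
     (if x \<le> s then (s choose x) * multipartite_colouring_count [r, s - x, t] xs else 0) +
     (if x \<le> t then (t choose x) * multipartite_colouring_count [r, s, t - x] xs else 0)"
  by (simp add: numeral_eq_Suc upt_rec)

lemma not_schur_positive_tri_V_if_shift_vanishes:
  assumes ns: "mset ns = mset [r, s, t]"
    and xs: "\<forall>x\<in>set xs. 0 < x" "xs ! 1 < xs ! 0" "2 \<le> length xs"
    and ys: "ys = xs[0 := xs ! 0 - 1, 1 := xs ! 1 + 1]"
    and counts: "multipartite_colouring_count ns xs \<noteq> 0" "multipartite_colouring_count ns ys = 0"
  shows "\<not> schur_positive (tri_V r s t) tri_E"
proof (rule not_schur_positive_if_shift_vanishes)
  have "0 < xs ! 1"
    using xs(1,3) by simp
  then have "1 < xs ! 0"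
    using xs(2) by simp
  then have "\<forall>y\<in>set ys. 0 < y"
    using xs(1) ys by (auto dest!: set_update_subset_insert[THEN subsetD])
  then show "chrom_coeff (tri_V r s t) tri_E (list_exponent (xs[0 := xs ! 0 - 1, 1 := xs ! 1 + 1])) = 0"
    using counts(2) ys chrom_coeff_tri_V_list_exponent[OF ns] by simp
  show "chrom_coeff (tri_V r s t) tri_E (list_exponent xs) \<noteq> 0"
    using xs(1) counts(1) chrom_coeff_tri_V_list_exponent[OF ns] by simp
qed (use xs in auto)

lemma not_schur_positive_tri_V_sorted:
  assumes ns: "mset [a, b, c] = mset [r, s, t]" and sorted: "c \<le> b" "b \<le> a" "1 \<le> c"
    and exc: "[c, b, a] \<notin> {[1, 1, 1], [1, 1, 2], [1, 2, 2], [2, 2, 2], [2, 2, 3]}"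
  shows "\<not> schur_positive (tri_V r s t) tri_E"
proof -
  note witness = not_schur_positive_tri_V_if_shift_vanishes[OF ns]
  note count_simps = multipartite_colouring_count_3_Cons multipartite_colouring_count.simps(1)
  (* In each case the shifted composition is not realisable: its class sizes cannot be
     grouped so as to fill parts of sizes a, b and c. *)
  consider "c + 2 \<le> a" | "a = c" "b = c" | "a = c + 1" "b = c" | "a = c + 1" "b = a"
    using sorted by linarith
  then show ?thesis
  proof cases
    case 1
    show ?thesis
    proof (rule witness[of "[a, c, b]" "[a - 1, c + 1, b]"])
      show "multipartite_colouring_count [a, b, c] [a, c, b] \<noteq> 0"
        using sorted by (simp only: count_simps) (simp split: if_splits)
      show "multipartite_colouring_count [a, b, c] [a - 1, c + 1, b] = 0"
        using 1 sorted by (simp only: count_simps) (simp split: if_splits)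
    qed (use 1 sorted in auto)
  next
    case 2
    then have c: "3 \<le> c"
      using exc sorted by (cases "c = 1"; cases "c = 2") auto
    show ?thesis
    proof (rule witness[of "[c, 1, c - 1, c]" "[c - 1, 2, c - 1, c]"])
      show "multipartite_colouring_count [a, b, c] [c, 1, c - 1, c] \<noteq> 0"
        using 2 c by (simp only: count_simps) (simp split: if_splits)
      show "multipartite_colouring_count [a, b, c] [c - 1, 2, c - 1, c] = 0"
        using 2 c by (simp only: count_simps) (simp split: if_splits)
    qed (use c in \<open>auto simp: less_Suc_eq numeral_eq_Suc\<close>)
  next
    case 3
    then have c: "3 \<le> c"
      using exc sorted by (cases "c = 1"; cases "c = 2") auto
    show ?thesis
    proof (rule witness[of "[c, 1, c - 1, c + 1]" "[c - 1, 2, c - 1, c + 1]"])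
      show "multipartite_colouring_count [a, b, c] [c, 1, c - 1, c + 1] \<noteq> 0"
        using 3 c by (simp only: count_simps) (simp split: if_splits)
      show "multipartite_colouring_count [a, b, c] [c - 1, 2, c - 1, c + 1] = 0"
        using 3 c by (simp only: count_simps) (simp split: if_splits)
    qed (use c in \<open>auto simp: less_Suc_eq numeral_eq_Suc\<close>)
  next
    case 4
    then have c: "2 \<le> c"
      using exc sorted by (cases "c = 1") auto
    show ?thesis
    proof (rule witness[of "[c + 1, 1, c, c]" "[c, 2, c, c]"])
      show "multipartite_colouring_count [a, b, c] [c + 1, 1, c, c] \<noteq> 0"
        using 4 c by (simp only: count_simps) (simp split: if_splits)
      show "multipartite_colouring_count [a, b, c] [c, 2, c, c] = 0"
        using 4 c by (simp only: count_simps) (simp split: if_splits)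
    qed (use c in \<open>auto simp: less_Suc_eq numeral_eq_Suc\<close>)
  qed
qed

lemma not_schur_positive_tri_V:
  assumes pos: "1 \<le> r" "1 \<le> s" "1 \<le> t"
    and exc: "sort [r, s, t] \<notin> {[1, 1, 1], [1, 1, 2], [1, 2, 2], [2, 2, 2], [2, 2, 3]}"
  shows "\<not> schur_positive (tri_V r s t) tri_E"
proof -
  have triple: "\<exists>c b a. xs = [c, b, a]" if "length xs = 3" for xs :: "nat list"
    using that by (auto simp: numeral_3_eq_3 length_Suc_conv)
  have "length (sort [r, s, t]) = 3"
    by (simp only: length_sort) simp
  then obtain c b a where abc: "sort [r, s, t] = [c, b, a]"
    using triple by blast
  have "sorted (sort [r, s, t])" "mset (sort [r, s, t]) = mset [r, s, t]"
    "set (sort [r, s, t]) = set [r, s, t]"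
    by (rule sorted_sort mset_sort set_sort)+
  then have "sorted [c, b, a]" "mset [a, b, c] = mset [r, s, t]" "c \<in> set [r, s, t]"
    unfolding abc by (auto simp: ac_simps)
  then show ?thesis
    using pos exc abc by (intro not_schur_positive_tri_V_sorted) auto
qed

theorem theorem3p7:
  shows "e_positive (tri_V 1 1 1) tri_E \<and> e_positive (tri_V 1 1 2) tri_E \<and>
         e_positive (tri_V 1 2 2) tri_E \<and> e_positive (tri_V 2 2 2) tri_E \<and>
         e_positive (tri_V 2 2 3) tri_E \<and>
         (\<forall>r s t :: nat. 1 \<le> r \<and> 1 \<le> s \<and> 1 \<le> t \<and>
            sort [r, s, t] \<notin> {[1,1,1], [1,1,2], [1,2,2], [2,2,2], [2,2,3]} \<longrightarrow>
            \<not> schur_positive (tri_V r s t) tri_E)"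
  using e_positive_K111 e_positive_K112 e_positive_K122 e_positive_K222 e_positive_K223
    not_schur_positive_tri_V by blast

end
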